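(* Let $n\ge 1$ and let $S\subseteq U_{6n}$ with $1\notin S=S^{-1}$. Write $S=S_1\cup S_2$ where $S_1=S\cap\left(\langle a^2\rangle\cup\langle a^2\rangle b\cup\langle a^2\rangle b^2\right)$ and $S_2=S\cap\left(\langle a^2\rangle a\cup\langle a^2\rangle ab\cup\langle a^2\rangle ab^2\right)$. Then $\mathrm{Cay}(U_{6n},S)$ is integral if and only if both of the following hold for all $0\le j\le 2n-1$ and $0\le k\le n-1$: (1) $\chi_j(S)$, $\psi_k(S_1)$ and $\psi_k(S_1^2)+\psi_k(S_2^2)$ are integers; (2) $\Delta_{\psi_k}(S):=2\left(\psi_k(S_1^2)+\psi_k(S_2^2)\right)-\psi_k(S_1)^2$ is a perfect square (the square of an integer).
   Context: For an integer $n\ge1$, $U_{6n}=\langle a,b\mid a^{2n}=b^3=1,\ a^{-1}ba=b^{-1}\rangle$, a group of order $6n$ whose elements are uniquely $a^ib^\epsilon$ with $0\le i\le 2n-1$, $\epsilon\in\{0,1,2\}$. Let $\omega=\exp(\pi\imath/n)$. Its irreducible complex characters are: the $2n$ linear characters $\chi_j$ ($0\le j\le 2n-1$) given by $\chi_j(a^{2r}b^\epsilon)=\omega^{2jr}$ and $\chi_j(a^{2r+1}b^\epsilon)=\omega^{j(2r+1)}$ for all $\epsilon\in\{0,1,2\}$; and the $n$ degree-two characters $\psi_k$ ($0\le k\le n-1$) given by $\psi_k(a^{2r})=2\omega^{2kr}$, $\psi_k(a^{2r}b)=\psi_k(a^{2r}b^2)=-\omega^{2kr}$, $\psi_k(a^{2r+1}b^\epsilon)=0$.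 For a character $\chi$ and subsets $A,B$ of a group, $\chi(A)=\sum_{x\in A}\chi(x)$ (with $\chi(\emptyset)=0$) and $\chi(A^2)=\sum_{x_1,x_2\in A}\chi(x_1x_2)$, the sum running over all ordered pairs. For a group $G$ and $S\subseteq G$ with $1\notin S=S^{-1}$, the Cayley graph $\mathrm{Cay}(G,S)$ has vertex set $G$ and edges $\{g,sg\}$ for $g\in G,s\in S$. A graph is integral if all eigenvalues of its adjacency matrix are integers. *)

theory Defs
  imports Complex_Main "HOL-Algebra.Group"
begin

text \<open>The group U_{6n}: the element a^i b^e (0 <= i < 2n, 0 <= e < 3) is encoded as
  the pair (i, e). Since b a = a b^{-1}, we have b^e a^j = a^j b^{e (-1)^j}, hence
  (a^i b^e)(a^j b^f) = a^{i+j} b^{e (-1)^j + f}.\<close>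

definition U_mult :: "nat \<Rightarrow> nat \<times> nat \<Rightarrow> nat \<times> nat \<Rightarrow> nat \<times> nat" where
  "U_mult n x y = ((fst x + fst y) mod (2 * n),
                   (if even (fst y) then snd x + snd y
                    else 2 * snd x + snd y) mod 3)"

definition U :: "nat \<Rightarrow> (nat \<times> nat) monoid" where
  "U n = \<lparr> carrier = {0..<2 * n} \<times> {0..<3}, mult = U_mult n, one = (0, 0) \<rparr>"

definition gen_a :: "nat \<times> nat" where "gen_a = (1, 0)"
definition gen_b :: "nat \<times> nat" where "gen_b = (0, 1)"

definition omega :: "nat \<Rightarrow> complex" where
  "omega n = exp (complex_of_real pi * \<i> / of_nat n)"

definition chi :: "nat \<Rightarrow> nat \<Rightarrow> nat \<times> nat \<Rightarrow> complex" where
  "chi n j x = omega n ^ (j * fst x)"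

definition psi :: "nat \<Rightarrow> nat \<Rightarrow> nat \<times> nat \<Rightarrow> complex" where
  "psi n k x = (if even (fst x)
                then (if snd x = 0 then 2 * omega n ^ (k * fst x) else - (omega n ^ (k * fst x)))
                else 0)"

text \<open>chi(A) and chi(A^2) (sum over ordered pairs) for a character on a group G.\<close>
definition char_set :: "('a \<Rightarrow> complex) \<Rightarrow> 'a set \<Rightarrow> complex" where
  "char_set c A = (\<Sum>x\<in>A. c x)"

definition char_sq :: "('a, 'b) monoid_scheme \<Rightarrow> ('a \<Rightarrow> complex) \<Rightarrow> 'a set \<Rightarrow> complex" where
  "char_sq G c A = (\<Sum>x1\<in>A. \<Sum>x2\<in>A. c (x1 \<otimes>\<^bsub>G\<^esub> x2))"

definition cay_adj :: "('a, 'b) monoid_scheme \<Rightarrow> 'a set \<Rightarrow> 'a \<Rightarrow> 'a \<Rightarrow> complex" where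
  "cay_adj G S g h = (if h \<otimes>\<^bsub>G\<^esub> inv\<^bsub>G\<^esub> g \<in> S then 1 else 0)"

definition mat_eigenvalue :: "'a set \<Rightarrow> ('a \<Rightarrow> 'a \<Rightarrow> complex) \<Rightarrow> complex \<Rightarrow> bool" where
  "mat_eigenvalue V M c \<longleftrightarrow>
     (\<exists>f :: 'a \<Rightarrow> complex. (\<exists>v\<in>V. f v \<noteq> 0) \<and>
        (\<forall>g\<in>V. (\<Sum>h\<in>V. M g h * f h) = c * f g))"

definition integral_cayley :: "('a, 'b) monoid_scheme \<Rightarrow> 'a set \<Rightarrow> bool" where
  "integral_cayley G S \<longleftrightarrow>
     (\<forall>c. mat_eigenvalue (carrier G) (cay_adj G S) c \<longrightarrow> c \<in> \<int>)"

end

theory Submission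
  imports Defs
begin

(* For k < n and l < 3 put w = omega^k and z = zeta^l, where zeta is a primitive cube root of
   unity. The function a^i b^e |-> w^i z^e, restricted to even i and to odd i, gives two functions
   spanning a plane that the adjacency operator of Cay(U_6n, S) maps into itself; on it the
   operator acts by a 2x2 matrix of twisted sums over S1 and S2. The 6n functions obtained in this
   way are complete (discrete Fourier inversion) and the adjacency operator is symmetric, so the
   eigenvalues of the graph are exactly the eigenvalues of the 3n blocks. For l = 0 the block has
   the form [[X, Y], [Y, X]], with eigenvalues chi_k(S) and chi_(k+n)(S). For l = 1, 2 its trace
   is psi_k(S1) and the trace of its square is psi_k(S1^2) + psi_k(S2^2). Both eigenvalues x1, x2
   of a complex 2x2 matrix A are integers iff tr A and tr A^2 are integers and 2 tr A^2 - (tr A)^2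
   = (x1 - x2)^2 is the square of an integer. *)

section \<open>Integral eigenvalues of 2x2 matrices\<close>

definition is_eigenvalue_2x2 :: "complex \<Rightarrow> complex \<Rightarrow> complex \<Rightarrow> complex \<Rightarrow> complex \<Rightarrow> bool" where
  "is_eigenvalue_2x2 a b c d x \<longleftrightarrow> (x - a) * (x - d) = b * c"

lemma complex_Vieta_pair: "\<exists>x1 x2 :: complex. x1 + x2 = s \<and> x1 * x2 = p"
proof -
  define r where "r = csqrt (s\<^sup>2 - 4 * p)"
  have "r\<^sup>2 = s\<^sup>2 - 4 * p" by (simp add: r_def)
  then have "(s + r) / 2 * ((s - r) / 2) = p"
    by (simp add: field_simps power2_eq_square)
  then show ?thesis by (intro exI[of _ "(s + r) / 2"] exI[of _ "(s - r) / 2"]) (simp add: field_simps)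
qed

lemma is_eigenvalue_2x2_iff_roots:
  assumes "x1 + x2 = a + d" "x1 * x2 = a * d - b * c"
  shows "is_eigenvalue_2x2 a b c d x \<longleftrightarrow> x = x1 \<or> x = x2"
proof -
  have "(x - a) * (x - d) - b * c = x * x - (a + d) * x + (a * d - b * c)"
    by (simp add: algebra_simps)
  also have "\<dots> = (x - x1) * (x - x2)"
    unfolding assms[symmetric] by (simp add: algebra_simps)
  finally show ?thesis
    unfolding is_eigenvalue_2x2_def by (metis right_minus_eq mult_eq_0_iff)
qed

lemma is_eigenvalue_2x2_symmetric:
  "is_eigenvalue_2x2 a b b a x \<longleftrightarrow> x = a + b \<or> x = a - b"
  by (rule is_eigenvalue_2x2_iff_roots) (simp_all add: algebra_simps power2_eq_square)

lemma Ints_pair_iff: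
  fixes x1 x2 :: complex
  shows "x1 \<in> \<int> \<and> x2 \<in> \<int> \<longleftrightarrow>
    x1 + x2 \<in> \<int> \<and> x1\<^sup>2 + x2\<^sup>2 \<in> \<int> \<and> (\<exists>m :: int. (x1 - x2)\<^sup>2 = of_int (m\<^sup>2))"
proof
  assume "x1 \<in> \<int> \<and> x2 \<in> \<int>"
  then obtain i1 i2 where "x1 = of_int i1" "x2 = of_int i2" by (auto elim!: Ints_cases)
  then show "x1 + x2 \<in> \<int> \<and> x1\<^sup>2 + x2\<^sup>2 \<in> \<int> \<and> (\<exists>m :: int. (x1 - x2)\<^sup>2 = of_int (m\<^sup>2))"
    by (intro conjI exI[of _ "i1 - i2"]) auto
next
  assume "x1 + x2 \<in> \<int> \<and> x1\<^sup>2 + x2\<^sup>2 \<in> \<int> \<and> (\<exists>m :: int. (x1 - x2)\<^sup>2 = of_int (m\<^sup>2))"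
  then obtain t q m :: int where t: "x1 + x2 = of_int t" and q: "x1\<^sup>2 + x2\<^sup>2 = of_int q"
    and m: "(x1 - x2)\<^sup>2 = of_int (m\<^sup>2)" by (auto elim!: Ints_cases)
  have "(x1 + x2)\<^sup>2 + (x1 - x2)\<^sup>2 = 2 * (x1\<^sup>2 + x2\<^sup>2)" by (simp add: algebra_simps power2_eq_square)
  then have "of_int (t\<^sup>2 + m\<^sup>2) = (of_int (2 * q) :: complex)" by (simp add: t q m)
  then have "even (t\<^sup>2 + m\<^sup>2)" by (simp only: of_int_eq_iff) simp
  then have "even (t + m)" "even (t - m)" by auto
  then obtain u v where u: "t + m = 2 * u" and v: "t - m = 2 * v" by (meson evenE)
  have "x1 - x2 = of_int m \<or> x1 - x2 = - of_int m"
    using m by (simp add: power2_eq_iff)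
  then have "x1 = of_int u \<and> x2 = of_int v \<or> x1 = of_int v \<and> x2 = of_int u"
  proof
    assume "x1 - x2 = of_int m"
    with t have "2 * x1 = of_int (t + m)" "2 * x2 = of_int (t - m)" by (auto simp: algebra_simps)
    with u v show ?thesis by simp
  next
    assume "x1 - x2 = - of_int m"
    with t have "2 * x1 = of_int (t - m)" "2 * x2 = of_int (t + m)" by (auto simp: algebra_simps)
    with u v show ?thesis by simp
  qed
  then show "x1 \<in> \<int> \<and> x2 \<in> \<int>" by auto
qed

(* a^2 + d^2 + 2 b c is the trace of the square of the matrix. *)
lemma is_eigenvalue_2x2_Ints_iff:
  "(\<forall>x. is_eigenvalue_2x2 a b c d x \<longrightarrow> x \<in> \<int>) \<longleftrightarrow>
     a + d \<in> \<int> \<and> a\<^sup>2 + d\<^sup>2 + 2 * b * c \<in> \<int> \<and>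
     (\<exists>m :: int. 2 * (a\<^sup>2 + d\<^sup>2 + 2 * b * c) - (a + d)\<^sup>2 = of_int (m\<^sup>2))"
proof -
  obtain x1 x2 where s: "x1 + x2 = a + d" and p: "x1 * x2 = a * d - b * c"
    using complex_Vieta_pair by blast
  have sq: "a\<^sup>2 + d\<^sup>2 + 2 * b * c = (a + d)\<^sup>2 - 2 * (a * d - b * c)"
    by (simp add: power2_eq_square algebra_simps)
  have disc: "2 * (x1\<^sup>2 + x2\<^sup>2) - (x1 + x2)\<^sup>2 = (x1 - x2)\<^sup>2"
    by (simp add: power2_eq_square algebra_simps)
  have squares: "x1\<^sup>2 + x2\<^sup>2 = a\<^sup>2 + d\<^sup>2 + 2 * b * c"
    unfolding sq s[symmetric] p[symmetric] by (simp add: power2_eq_square algebra_simps)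
  have "(\<forall>x. is_eigenvalue_2x2 a b c d x \<longrightarrow> x \<in> \<int>) \<longleftrightarrow> x1 \<in> \<int> \<and> x2 \<in> \<int>"
    by (auto simp: is_eigenvalue_2x2_iff_roots[OF s p])
  then show ?thesis
    unfolding Ints_pair_iff disc[symmetric] squares s .
qed

section \<open>Eigenvalues of an operator with an invariant plane\<close>

lemma is_eigenvalue_2x2_left_eigenvector:
  assumes "is_eigenvalue_2x2 a b c d x"
  obtains y z where "y \<noteq> 0 \<or> z \<noteq> 0" "y * a + z * c = x * y" "y * b + z * d = x * z"
proof (cases "c \<noteq> 0 \<or> a \<noteq> x")
  case True
  show ?thesis
    by (rule that[of c "x - a"]) (use True assms in \<open>auto simp: is_eigenvalue_2x2_def algebra_simps\<close>)
next
  case False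
  show ?thesis
  proof (cases "d \<noteq> x \<or> b \<noteq> 0")
    case True
    show ?thesis
      by (rule that[of "x - d" b]) (use True False in \<open>auto simp: algebra_simps\<close>)
  next
    case False': False
    show ?thesis by (rule that[of 1 0]) (use False False' in auto)
  qed
qed

definition acts_by_2x2 ::
  "'a set \<Rightarrow> ('a \<Rightarrow> 'a \<Rightarrow> complex) \<Rightarrow> ('a \<Rightarrow> complex) \<Rightarrow> ('a \<Rightarrow> complex) \<Rightarrow>
   complex \<Rightarrow> complex \<Rightarrow> complex \<Rightarrow> complex \<Rightarrow> bool" where
  "acts_by_2x2 V M u v a b c d \<longleftrightarrow>
     (\<forall>g\<in>V. (\<Sum>h\<in>V. M g h * u h) = a * u g + b * v g \<and>
            (\<Sum>h\<in>V. M g h * v h) = c * u g + d * v g)"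

lemma mat_eigenvalue_if_is_eigenvalue_2x2:
  assumes act: "acts_by_2x2 V M u v a b c d"
    and indep: "\<And>y z. \<forall>g\<in>V. y * u g + z * v g = 0 \<Longrightarrow> y = 0 \<and> z = 0"
    and "is_eigenvalue_2x2 a b c d x"
  shows "mat_eigenvalue V M x"
proof -
  obtain y z where yz: "y \<noteq> 0 \<or> z \<noteq> 0" "y * a + z * c = x * y" "y * b + z * d = x * z"
    using is_eigenvalue_2x2_left_eigenvector[OF \<open>is_eigenvalue_2x2 a b c d x\<close>] by blast
  define f where "f g = y * u g + z * v g" for g
  have "\<exists>g\<in>V. f g \<noteq> 0"
  proof (rule ccontr)
    assume "\<not> (\<exists>g\<in>V. f g \<noteq> 0)"
    then have "\<forall>g\<in>V. y * u g + z * v g = 0" by (simp add: f_def)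
    then show False using indep yz(1) by blast
  qed
  moreover have "(\<Sum>h\<in>V. M g h * f h) = x * f g" if "g \<in> V" for g
  proof -
    have "(\<Sum>h\<in>V. M g h * f h) = y * (\<Sum>h\<in>V. M g h * u h) + z * (\<Sum>h\<in>V. M g h * v h)"
      by (simp add: f_def algebra_simps sum.distrib sum_distrib_left)
    also have "\<dots> = (y * a + z * c) * u g + (y * b + z * d) * v g"
      using act that by (simp add: acts_by_2x2_def algebra_simps)
    also have "\<dots> = x * f g" unfolding yz f_def by (simp add: algebra_simps)
    finally show ?thesis .
  qed
  ultimately show ?thesis unfolding mat_eigenvalue_def by blast
qed

lemma is_eigenvalue_2x2_if_mat_eigenvalue:
  assumes sym: "\<And>g h. g \<in> V \<Longrightarrow> h \<in> V \<Longrightarrow> M g h = M h g"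
    and act: "acts_by_2x2 V M u v a b c d"
    and eigen: "\<forall>g\<in>V. (\<Sum>h\<in>V. M g h * f h) = x * f g"
    and nonzero: "(\<Sum>g\<in>V. u g * f g) \<noteq> 0 \<or> (\<Sum>g\<in>V. v g * f g) \<noteq> 0"
  shows "is_eigenvalue_2x2 a b c d x"
proof -
  have pairing: "x * (\<Sum>g\<in>V. w g * f g) = (\<Sum>h\<in>V. (\<Sum>g\<in>V. M h g * w g) * f h)" for w
  proof -
    have "x * (\<Sum>g\<in>V. w g * f g) = (\<Sum>g\<in>V. w g * (x * f g))"
      by (simp add: sum_distrib_left mult_ac)
    also have "\<dots> = (\<Sum>g\<in>V. w g * (\<Sum>h\<in>V. M g h * f h))"
      using eigen by simp
    also have "\<dots> = (\<Sum>g\<in>V. \<Sum>h\<in>V. w g * M g h * f h)"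
      by (simp add: sum_distrib_left mult_ac)
    also have "\<dots> = (\<Sum>h\<in>V. \<Sum>g\<in>V. M h g * w g * f h)"
      by (subst sum.swap) (auto intro!: sum.cong simp: sym)
    finally show ?thesis by (simp add: sum_distrib_right)
  qed
  define P Q where "P = (\<Sum>g\<in>V. u g * f g)" and "Q = (\<Sum>g\<in>V. v g * f g)"
  have "x * P = a * P + b * Q" "x * Q = c * P + d * Q"
    using act unfolding P_def Q_def pairing acts_by_2x2_def
    by (auto intro!: sum.cong simp: algebra_simps sum.distrib sum_distrib_left)
  then have "(x - a) * P = b * Q" "(x - d) * Q = c * P" by (simp_all add: algebra_simps)
  then have "(x - a) * (x - d) * P = b * c * P" "(x - a) * (x - d) * Q = b * c * Q"
    by (metis mult.assoc mult.commute)+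
  then show ?thesis using nonzero unfolding is_eigenvalue_2x2_def P_def[symmetric] Q_def[symmetric]
    by auto
qed

section \<open>Adjacency operators of Cayley graphs\<close>

lemma sum_cay_adj:
  fixes G (structure)
  assumes "group G" "finite (carrier G)" "S \<subseteq> carrier G" "g \<in> carrier G"
  shows "(\<Sum>h\<in>carrier G. cay_adj G S g h * f h) = (\<Sum>s\<in>S. f (s \<otimes> g))"
proof -
  interpret group G by fact
  have "(\<Sum>h\<in>carrier G. cay_adj G S g h * f h) =
        (\<Sum>h\<in>carrier G. if h \<otimes> inv g \<in> S then f h else 0)"
    by (intro sum.cong) (auto simp: cay_adj_def)
  also have "\<dots> = (\<Sum>h\<in>{h\<in>carrier G. h \<otimes> inv g \<in> S}. f h)"
    using assms(2) by (simp add: sum.inter_filter)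
  also have "\<dots> = (\<Sum>s\<in>S. f (s \<otimes> g))"
    using assms by (intro sum.reindex_bij_witness[of _ "\<lambda>s. s \<otimes> g" "\<lambda>h. h \<otimes> inv g"])
      (auto simp: m_assoc)
  finally show ?thesis .
qed

lemma cay_adj_commute:
  fixes G (structure)
  assumes "group G" "S \<subseteq> carrier G" "(\<lambda>s. inv s) ` S = S" "g \<in> carrier G" "h \<in> carrier G"
  shows "cay_adj G S g h = cay_adj G S h g"
proof -
  interpret group G by fact
  have "h \<otimes> inv g \<in> S \<longleftrightarrow> g \<otimes> inv h \<in> S"
    using assms by (metis image_eqI inv_mult_group inv_closed inv_inv)
  then show ?thesis by (simp add: cay_adj_def)
qed

section \<open>Roots of unity\<close>

lemma power_mod_eq_if_power_eq_1:
  fixes x :: "'a :: monoid_mult"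
  assumes "x ^ N = 1"
  shows "x ^ (m mod N) = x ^ m"
proof -
  have "x ^ m = x ^ (N * (m div N) + m mod N)" by simp
  also have "\<dots> = (x ^ N) ^ (m div N) * x ^ (m mod N)" by (simp only: power_add power_mult)
  finally show ?thesis by (simp add: assms)
qed

lemma cis_power_eq_1_iff:
  fixes N m :: nat
  assumes "N > 0"
  shows "cis (2 * pi / N) ^ m = 1 \<longleftrightarrow> N dvd m"
proof
  assume "cis (2 * pi / N) ^ m = 1"
  then have "cos (real m * (2 * pi / N)) = 1"
    by (metis DeMoivre cis.sel(1) one_complex.sel(1))
  then obtain j :: int where "real m * (2 * pi / N) = of_int j * 2 * pi"
    using cos_one_2pi_int by blast
  then have "real m = real N * of_int j" using assms by (simp add: field_simps)
  then have "int m = int N * j" by (metis of_int_eq_iff of_int_mult of_int_of_nat_eq)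
  then show "N dvd m" by (metis dvd_triv_left int_dvd_int_iff)
next
  assume "N dvd m"
  then obtain j where "m = N * j" by blast
  then have "real m * (2 * pi / N) = 2 * pi * real j" using assms by simp
  then show "cis (2 * pi / N) ^ m = 1" by (simp add: DeMoivre)
qed

lemma sum_powers_primitive_root:
  fixes w :: complex
  assumes primitive: "\<And>j. w ^ j = 1 \<longleftrightarrow> N dvd j"
  shows "(\<Sum>k<N. w ^ (k * m)) = (if N dvd m then of_nat N else 0)"
proof (cases "N dvd m")
  case True
  then have "w ^ m = 1" by (simp add: primitive)
  then show ?thesis using True by (simp add: power_mult mult.commute[of _ m])
next
  case False
  then have "w ^ m \<noteq> 1" "(w ^ m) ^ N = 1" by (simp_all add: primitive flip: power_mult)
  then show ?thesis using False geometric_sum[of "w ^ m" N]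
    by (simp add: power_mult mult.commute[of _ m])
qed

lemma power_3_eq_1_if_cube_root:
  fixes z :: "'a :: comm_ring_1"
  assumes "z\<^sup>2 + z + 1 = 0"
  shows "z ^ 3 = 1"
proof -
  have "z ^ 3 - 1 = (z - 1) * (z\<^sup>2 + z + 1)"
    by (simp add: algebra_simps power2_eq_square power3_eq_cube)
  then show ?thesis using assms by simp
qed

lemma cube_root_power_pair:
  fixes z :: complex
  assumes "z\<^sup>2 + z + 1 = 0"
  shows "z ^ r + (z\<^sup>2) ^ r = (if 3 dvd r then 2 else -1)"
proof -
  note z3 = power_3_eq_1_if_cube_root[OF assms]
  have pair: "z + z\<^sup>2 = -1"
    using assms by (simp add: algebra_simps eq_neg_iff_add_eq_0)
  have "z ^ r + (z\<^sup>2) ^ r = z ^ (r mod 3) + (z ^ (r mod 3))\<^sup>2"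
    by (simp add: power_mod_eq_if_power_eq_1[OF z3] flip: power_mult) (simp add: mult.commute)
  moreover consider "r mod 3 = 0" | "r mod 3 = 1" | "r mod 3 = 2" by linarith
  then have "z ^ (r mod 3) + (z ^ (r mod 3))\<^sup>2 = (if 3 dvd r then 2 else -1)"
  proof cases
    case 3
    have "(z\<^sup>2)\<^sup>2 = z" using z3 by (simp add: power4_eq_xxxx power3_eq_cube power2_eq_square mult.assoc)
    then show ?thesis using 3 pair by (simp add: dvd_eq_mod_eq_0 add.commute)
  qed (use pair in \<open>simp_all add: dvd_eq_mod_eq_0\<close>)
  ultimately show ?thesis by simp
qed

definition zeta :: complex where "zeta = cis (2 * pi / 3)"

lemma zeta_power_eq_1_iff: "zeta ^ m = 1 \<longleftrightarrow> 3 dvd m"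
  unfolding zeta_def using cis_power_eq_1_iff[of 3 m] by simp

lemma sum_zeta_powers: "(\<Sum>l<3. zeta ^ (l * m)) = (if 3 dvd m then 3 else 0)"
  using sum_powers_primitive_root[OF zeta_power_eq_1_iff] by simp

lemma zeta_power_cube_root:
  assumes "0 < l" "l < 3"
  shows "(zeta ^ l)\<^sup>2 + zeta ^ l + 1 = 0"
proof -
  have "(\<Sum>j<3. zeta ^ (j * l)) = 0" using assms sum_zeta_powers[of l] by auto
  then show ?thesis by (simp add: numeral_3_eq_3 power_mult mult.commute[of _ l] add_ac power2_eq_square)
qed

lemma omega_eq_cis: "n \<ge> 1 \<Longrightarrow> omega n = cis (2 * pi / real (2 * n))"
  unfolding omega_def cis_conv_exp by (simp add: mult.commute)

lemma omega_power_eq_1_iff: "n \<ge> 1 \<Longrightarrow> omega n ^ m = 1 \<longleftrightarrow> 2 * n dvd m"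
  using cis_power_eq_1_iff[of "2 * n" m] by (simp add: omega_eq_cis)

lemma omega_power_n: "n \<ge> 1 \<Longrightarrow> omega n ^ n = -1"
  by (simp add: omega_eq_cis DeMoivre)

lemma sum_omega_powers:
  assumes "n \<ge> 1" "even m"
  shows "(\<Sum>k<n. omega n ^ (k * m)) = (if 2 * n dvd m then of_nat n else 0)"
proof -
  obtain m' where m: "m = 2 * m'" using assms(2) by blast
  have "(omega n ^ 2) ^ j = 1 \<longleftrightarrow> n dvd j" for j
    using omega_power_eq_1_iff[OF assms(1), of "2 * j"] by (simp flip: power_mult)
  moreover have "omega n ^ (k * m) = (omega n ^ 2) ^ (k * m')" for k
    by (metis m power_mult mult.left_commute)
  ultimately show ?thesis using sum_powers_primitive_root[of "omega n ^ 2" n m'] by (simp add: m)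
qed

section \<open>The group U_6n\<close>

lemma even_mod_double_iff: "even ((m :: nat) mod (2 * n)) \<longleftrightarrow> even m"
  by (metis dvd_mod_iff dvd_triv_left)

lemma carrier_U: "carrier (U n) = {0..<2 * n} \<times> {0..<3}"
  by (simp add: U_def)

lemma mult_U: "x \<otimes>\<^bsub>U n\<^esub> y = U_mult n x y"
  by (simp add: U_def)

lemma one_U: "\<one>\<^bsub>U n\<^esub> = (0, 0)"
  by (simp add: U_def)

lemma U_mult_assoc: "U_mult n (U_mult n x y) z = U_mult n x (U_mult n y z)"
proof -
  obtain i e j f k g where xyz: "x = (i, e)" "y = (j, f)" "z = (k, g)" by (metis prod.exhaust)
  define \<sigma> :: "nat \<Rightarrow> nat" where "\<sigma> m = (if even m then 1 else 2)" for m
  have mult: "U_mult n (a, c) (b, d) = ((a + b) mod (2 * n), (\<sigma> b * c + d) mod 3)" for a b c d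
    by (simp add: U_mult_def \<sigma>_def)
  have "\<sigma> j * \<sigma> k mod 3 = \<sigma> ((j + k) mod (2 * n)) mod 3"
    by (simp add: \<sigma>_def even_mod_double_iff)
  then have \<sigma>: "\<sigma> j * \<sigma> k * e mod 3 = \<sigma> ((j + k) mod (2 * n)) * e mod 3"
    by (metis mod_mult_left_eq)
  have "(\<sigma> k * ((\<sigma> j * e + f) mod 3) + g) mod 3 = (\<sigma> k * (\<sigma> j * e + f) + g) mod 3"
    by (metis mod_add_left_eq mod_mult_right_eq)
  also have "\<dots> = (\<sigma> j * \<sigma> k * e mod 3 + (\<sigma> k * f + g)) mod 3"
    by (simp only: mod_add_left_eq) (simp add: algebra_simps)
  also have "\<dots> = (\<sigma> ((j + k) mod (2 * n)) * e + (\<sigma> k * f + g) mod 3) mod 3"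
    unfolding \<sigma> by (simp only: mod_add_left_eq mod_add_right_eq)
  finally show ?thesis by (simp add: xyz mult mod_simps add.assoc)
qed

lemma group_U:
  assumes "n \<ge> 1"
  shows "group (U n)"
proof (rule groupI)
  fix x y assume "x \<in> carrier (U n)" "y \<in> carrier (U n)"
  then show "x \<otimes>\<^bsub>U n\<^esub> y \<in> carrier (U n)"
    using assms by (simp add: carrier_U mult_U U_mult_def mem_Times_iff)
next
  show "\<one>\<^bsub>U n\<^esub> \<in> carrier (U n)" using assms by (simp add: carrier_U one_U)
next
  fix x y z
  show "x \<otimes>\<^bsub>U n\<^esub> y \<otimes>\<^bsub>U n\<^esub> z = x \<otimes>\<^bsub>U n\<^esub> (y \<otimes>\<^bsub>U n\<^esub> z)"
    by (simp add: mult_U U_mult_assoc)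
next
  fix x assume "x \<in> carrier (U n)"
  then show "\<one>\<^bsub>U n\<^esub> \<otimes>\<^bsub>U n\<^esub> x = x"
    by (auto simp: carrier_U mult_U one_U U_mult_def)
next
  fix x assume "x \<in> carrier (U n)"
  then obtain i e where x: "x = (i, e)" "i < 2 * n" "e < 3" by (auto simp: carrier_U)
  define y where "y = ((2 * n - i) mod (2 * n), if even i then (3 - e) mod 3 else e)"
  have "((2 * n - i) mod (2 * n) + i) mod (2 * n) = 0"
    using x by (simp add: mod_add_left_eq)
  moreover have "((3 - e) mod 3 + e) mod 3 = 0"
    using x by (simp add: mod_add_left_eq)
  ultimately have "y \<otimes>\<^bsub>U n\<^esub> x = \<one>\<^bsub>U n\<^esub>"
    by (simp add: y_def x mult_U one_U U_mult_def)
  moreover have "y \<in> carrier (U n)" using assms x by (simp add: y_def carrier_U)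
  ultimately show "\<exists>y\<in>carrier (U n). y \<otimes>\<^bsub>U n\<^esub> x = \<one>\<^bsub>U n\<^esub>" by blast
qed

section \<open>Blocks of the adjacency operator\<close>

definition twist :: "complex \<Rightarrow> complex \<Rightarrow> nat \<times> nat \<Rightarrow> complex" where
  "twist w z x = w ^ fst x * z ^ snd x"

definition U_basis :: "complex \<Rightarrow> complex \<Rightarrow> bool \<Rightarrow> nat \<times> nat \<Rightarrow> complex" where
  "U_basis w z b x = (if odd (fst x) = b then twist w z x else 0)"

lemma twist_U_mult:
  assumes w: "w ^ (2 * n) = 1" and z: "z ^ 3 = 1"
  shows "twist w z (U_mult n x y) = (if even (fst y) then twist w z x else twist w (z\<^sup>2) x) * twist w z y"
proof -
  obtain p q i e where xy: "x = (p, q)" "y = (i, e)" by (cases x, cases y) blast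
  have "w ^ ((p + i) mod (2 * n)) = w ^ p * w ^ i"
    by (simp add: power_mod_eq_if_power_eq_1[OF w] power_add)
  moreover have "z ^ ((q + e) mod 3) = z ^ q * z ^ e"
    by (simp add: power_mod_eq_if_power_eq_1[OF z] power_add)
  moreover have "z ^ ((2 * q + e) mod 3) = (z\<^sup>2) ^ q * z ^ e"
    by (simp add: power_mod_eq_if_power_eq_1[OF z] power_add power_mult)
  ultimately show ?thesis by (simp add: xy twist_def U_mult_def mult_ac)
qed

lemma U_basis_mult:
  assumes "w ^ (2 * n) = 1" "z ^ 3 = 1"
  shows "U_basis w z b (U_mult n s h) =
    (if odd (fst s) = b then twist w z s else 0) * U_basis w z False h +
    (if odd (fst s) \<noteq> b then twist w (z\<^sup>2) s else 0) * U_basis w z True h"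
proof -
  have "odd (fst (U_mult n s h)) \<longleftrightarrow> odd (fst s) \<noteq> odd (fst h)"
    by (simp add: U_mult_def even_mod_double_iff)
  then show ?thesis
    by (cases "even (fst h)") (simp_all add: U_basis_def twist_U_mult[OF assms])
qed

lemma acts_by_2x2_U_basis:
  assumes "n \<ge> 1" "S \<subseteq> carrier (U n)" "w ^ (2 * n) = 1" "z ^ 3 = 1"
  shows "acts_by_2x2 (carrier (U n)) (cay_adj (U n) S) (U_basis w z False) (U_basis w z True)
    (sum (twist w z) {s\<in>S. even (fst s)}) (sum (twist w (z\<^sup>2)) {s\<in>S. odd (fst s)})
    (sum (twist w z) {s\<in>S. odd (fst s)}) (sum (twist w (z\<^sup>2)) {s\<in>S. even (fst s)})"
proof -
  have fin: "finite (carrier (U n))" "finite S"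
    using assms(2) finite_subset by (auto simp: carrier_U)
  have "(\<Sum>h\<in>carrier (U n). cay_adj (U n) S g h * U_basis w z b h) =
      sum (twist w z) {s\<in>S. odd (fst s) = b} * U_basis w z False g +
      sum (twist w (z\<^sup>2)) {s\<in>S. odd (fst s) \<noteq> b} * U_basis w z True g"
    if "g \<in> carrier (U n)" for g b
    using fin(2)
    by (simp add: sum_cay_adj[OF group_U[OF assms(1)] fin(1) assms(2) that] mult_U
        U_basis_mult[OF assms(3,4)] sum.distrib sum.inter_filter flip: sum_distrib_right)
  then show ?thesis unfolding acts_by_2x2_def by simp
qed

lemma U_basis_independent:
  assumes "n \<ge> 1" "w \<noteq> 0"
    and "\<forall>g\<in>carrier (U n). y * U_basis w z False g + x * U_basis w z True g = 0"
  shows "y = 0 \<and> x = 0"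
proof -
  have "(0, 0) \<in> carrier (U n)" "(1, 0) \<in> carrier (U n)" using assms(1) by (auto simp: carrier_U)
  then show ?thesis using assms(2,3) by (force simp: U_basis_def twist_def)
qed

lemma dvd_add_diff_iff_eq:
  fixes i j N :: nat
  assumes "i < N" "j < N"
  shows "N dvd i + (N - j) \<longleftrightarrow> i = j"
proof
  assume "N dvd i + (N - j)"
  then obtain c where c: "i + (N - j) = N * c" by blast
  have "N * c < N * 2" using assms c by linarith
  then have "c < 2" by simp
  moreover have "c \<noteq> 0" using assms c by (metis add_is_0 diff_is_0_eq mult_0_right not_le)
  ultimately have "c = 1" by simp
  then show "i = j" using c assms by simp
qed (use assms in simp)

lemma U_basis_complete:
  assumes n: "n \<ge> 1"
    and orth: "\<forall>b. \<forall>k<n. \<forall>l<3.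
      (\<Sum>g\<in>carrier (U n). U_basis (omega n ^ k) (zeta ^ l) b g * f g) = 0"
    and "g0 \<in> carrier (U n)"
  shows "f g0 = 0"
proof -
  obtain i0 e0 where g0: "g0 = (i0, e0)" "i0 < 2 * n" "e0 < 3"
    using \<open>g0 \<in> carrier (U n)\<close> by (auto simp: carrier_U)
  \<comment> \<open>omega n ^ (2 * n - i0) and zeta ^ (3 - e0) invert omega n ^ i0 and zeta ^ e0\<close>
  define coeff where "coeff k l = omega n ^ (k * (2 * n - i0)) * zeta ^ (l * (3 - e0))" for k l
  define kernel where
    "kernel g = (\<Sum>k<n. \<Sum>l<3. coeff k l * U_basis (omega n ^ k) (zeta ^ l) (odd i0) g)" for g
  have kernel_eq: "kernel g = (if g = g0 then of_nat (3 * n) else 0)" if g_in: "g \<in> carrier (U n)" for g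
  proof -
    obtain i e where g: "g = (i, e)" "i < 2 * n" "e < 3"
      using g_in by (cases g) (auto simp: carrier_U)
    show ?thesis
    proof (cases "odd i = odd i0")
      case True
      have "kernel g = (\<Sum>k<n. \<Sum>l<3. omega n ^ (k * (i + (2 * n - i0))) * zeta ^ (l * (e + (3 - e0))))"
        using True unfolding kernel_def coeff_def
        by (simp add: g U_basis_def twist_def algebra_simps power_add flip: power_mult)
      also have "\<dots> = (\<Sum>k<n. omega n ^ (k * (i + (2 * n - i0)))) * (\<Sum>l<3. zeta ^ (l * (e + (3 - e0))))"
        by (simp add: sum_product)
      also have "\<dots> = (if i = i0 then of_nat n else 0) * (if e = e0 then 3 else 0)"
      proof -
        have "even (i + (2 * n - i0))" using True g0 by presburger
        then show ?thesis
          using g g0 by (simp only: sum_omega_powers[OF n] sum_zeta_powers dvd_add_diff_iff_eq)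
      qed
      also have "\<dots> = (if g = g0 then of_nat (3 * n) else 0)"
        using g g0 by auto
      finally show ?thesis .
    next
      case False
      then show ?thesis using g g0 by (auto simp: kernel_def U_basis_def)
    qed
  qed
  have "0 = (\<Sum>k<n. \<Sum>l<3. coeff k l *
        (\<Sum>g\<in>carrier (U n). U_basis (omega n ^ k) (zeta ^ l) (odd i0) g * f g))"
    using orth by simp
  also have "\<dots> = (\<Sum>g\<in>carrier (U n). kernel g * f g)"
    unfolding kernel_def by (simp add: sum_distrib_left sum_distrib_right mult_ac sum.swap[of _ "carrier (U n)"])
  also have "\<dots> = (\<Sum>g\<in>carrier (U n). if g = g0 then of_nat (3 * n) * f g0 else 0)"
    by (intro sum.cong) (simp_all add: kernel_eq)
  also have "\<dots> = of_nat (3 * n) * f g0"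
    using \<open>g0 \<in> carrier (U n)\<close> by (simp add: carrier_U)
  finally show ?thesis using n by simp
qed

(* The eigenvalues of the matrix by which the adjacency operator acts on the plane spanned by
   U_basis w z False and U_basis w z True, see acts_by_2x2_U_basis. *)
definition U_block_eigenvalue :: "complex \<Rightarrow> complex \<Rightarrow> (nat \<times> nat) set \<Rightarrow> complex \<Rightarrow> bool" where
  "U_block_eigenvalue w z S x \<longleftrightarrow> is_eigenvalue_2x2
     (sum (twist w z) {s\<in>S. even (fst s)}) (sum (twist w (z\<^sup>2)) {s\<in>S. odd (fst s)})
     (sum (twist w z) {s\<in>S. odd (fst s)}) (sum (twist w (z\<^sup>2)) {s\<in>S. even (fst s)}) x"

lemma mat_eigenvalue_cay_U_iff:
  assumes n: "n \<ge> 1" and S: "S \<subseteq> carrier (U n)" "(\<lambda>s. inv\<^bsub>U n\<^esub> s) ` S = S"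
  shows "mat_eigenvalue (carrier (U n)) (cay_adj (U n) S) x \<longleftrightarrow>
    (\<exists>k<n. \<exists>l<3. U_block_eigenvalue (omega n ^ k) (zeta ^ l) S x)"
proof -
  have acts: "acts_by_2x2 (carrier (U n)) (cay_adj (U n) S)
      (U_basis (omega n ^ k) (zeta ^ l) False) (U_basis (omega n ^ k) (zeta ^ l) True)
      (sum (twist (omega n ^ k) (zeta ^ l)) {s\<in>S. even (fst s)})
      (sum (twist (omega n ^ k) ((zeta ^ l)\<^sup>2)) {s\<in>S. odd (fst s)})
      (sum (twist (omega n ^ k) (zeta ^ l)) {s\<in>S. odd (fst s)})
      (sum (twist (omega n ^ k) ((zeta ^ l)\<^sup>2)) {s\<in>S. even (fst s)})" for k l
    by (rule acts_by_2x2_U_basis[OF n S(1)])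
      (simp_all add: omega_power_eq_1_iff[OF n] zeta_power_eq_1_iff flip: power_mult)
  show ?thesis
  proof
    assume "mat_eigenvalue (carrier (U n)) (cay_adj (U n) S) x"
    then obtain f g0 where f: "g0 \<in> carrier (U n)" "f g0 \<noteq> 0"
      "\<forall>g\<in>carrier (U n). (\<Sum>h\<in>carrier (U n). cay_adj (U n) S g h * f h) = x * f g"
      unfolding mat_eigenvalue_def by blast
    then obtain b k l where "k < n" "l < 3"
      "(\<Sum>g\<in>carrier (U n). U_basis (omega n ^ k) (zeta ^ l) b g * f g) \<noteq> 0"
      using U_basis_complete[OF n, of f g0] by blast
    then show "\<exists>k<n. \<exists>l<3. U_block_eigenvalue (omega n ^ k) (zeta ^ l) S x"
      unfolding U_block_eigenvalue_def
      using is_eigenvalue_2x2_if_mat_eigenvalue[OF _ acts f(3)]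
        cay_adj_commute[OF group_U[OF n] S] by (cases b) (auto simp: carrier_U)
  next
    assume "\<exists>k<n. \<exists>l<3. U_block_eigenvalue (omega n ^ k) (zeta ^ l) S x"
    then obtain k l where block: "U_block_eigenvalue (omega n ^ k) (zeta ^ l) S x" by blast
    have "omega n ^ k \<noteq> 0" by (simp add: omega_def)
    then have "y = 0 \<and> z = 0"
      if "\<forall>g\<in>carrier (U n). y * U_basis (omega n ^ k) (zeta ^ l) False g +
          z * U_basis (omega n ^ k) (zeta ^ l) True g = 0" for y z
      using U_basis_independent[OF n _ that] by blast
    then show "mat_eigenvalue (carrier (U n)) (cay_adj (U n) S) x"
      using mat_eigenvalue_if_is_eigenvalue_2x2[OF acts] block
      unfolding U_block_eigenvalue_def by blast
  qed
qed

section \<open>The blocks in terms of characters\<close>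

lemma sum_split_parity:
  assumes "finite S"
  shows "sum f S = sum f {s\<in>S. even (fst s)} + sum f {s\<in>S. odd (fst s)}"
proof -
  have "sum f S = sum f ({s\<in>S. even (fst s)} \<union> {s\<in>S. odd (fst s)})"
    by (rule arg_cong[of _ _ "sum f"]) auto
  also have "\<dots> = sum f {s\<in>S. even (fst s)} + sum f {s\<in>S. odd (fst s)}"
    using assms by (intro sum.union_disjoint) auto
  finally show ?thesis .
qed

lemma char_set_chi:
  assumes "n \<ge> 1" "finite S"
  shows "char_set (chi n k) S =
      sum (twist (omega n ^ k) 1) {s\<in>S. even (fst s)} + sum (twist (omega n ^ k) 1) {s\<in>S. odd (fst s)}"
    and "char_set (chi n (k + n)) S =
      sum (twist (omega n ^ k) 1) {s\<in>S. even (fst s)} - sum (twist (omega n ^ k) 1) {s\<in>S. odd (fst s)}"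
proof -
  note split = sum_split_parity[OF assms(2)]
  have "chi n (k + n) s = (omega n ^ k) ^ fst s * (omega n ^ n) ^ fst s" for s
    unfolding chi_def by (simp only: add_mult_distrib power_add power_mult)
  then have "chi n (k + n) s = (-1) ^ fst s * twist (omega n ^ k) 1 s" for s
    by (simp add: twist_def omega_power_n[OF assms(1)])
  then show "char_set (chi n (k + n)) S =
      sum (twist (omega n ^ k) 1) {s\<in>S. even (fst s)} - sum (twist (omega n ^ k) 1) {s\<in>S. odd (fst s)}"
    unfolding char_set_def split[of "chi n (k + n)"] by (simp add: sum_negf)
  show "char_set (chi n k) S =
      sum (twist (omega n ^ k) 1) {s\<in>S. even (fst s)} + sum (twist (omega n ^ k) 1) {s\<in>S. odd (fst s)}"
    unfolding char_set_def split[of "chi n k"] by (simp add: chi_def twist_def power_mult)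
qed

lemma all_less_double_iff: "(\<forall>j < 2 * (n :: nat). P j) \<longleftrightarrow> (\<forall>k < n. P k \<and> P (k + n))"
proof (intro iffI allI impI)
  fix j assume "\<forall>k<n. P k \<and> P (k + n)" "j < 2 * n"
  then show "P j" by (cases "j < n") (auto dest: spec[of _ "j - n"])
qed auto

lemma U_block_1_Ints_iff_chi:
  assumes "n \<ge> 1" "finite S"
  shows "(\<forall>k<n. \<forall>x. U_block_eigenvalue (omega n ^ k) 1 S x \<longrightarrow> x \<in> \<int>) \<longleftrightarrow>
    (\<forall>j<2 * n. char_set (chi n j) S \<in> \<int>)"
proof -
  have block: "U_block_eigenvalue (omega n ^ k) 1 S x \<longleftrightarrow>
      x = char_set (chi n k) S \<or> x = char_set (chi n (k + n)) S" for k x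
    by (simp add: U_block_eigenvalue_def is_eigenvalue_2x2_symmetric char_set_chi[OF assms, of k])
  have "(\<forall>x. U_block_eigenvalue (omega n ^ k) 1 S x \<longrightarrow> x \<in> \<int>) \<longleftrightarrow>
      char_set (chi n k) S \<in> \<int> \<and> char_set (chi n (k + n)) S \<in> \<int>" for k
    by (auto simp: block)
  then show ?thesis by (simp add: all_less_double_iff)
qed

lemma psi_eq_twist:
  assumes "z\<^sup>2 + z + 1 = 0" "even (fst x)" "snd x < 3"
  shows "psi n k x = twist (omega n ^ k) z x + twist (omega n ^ k) (z\<^sup>2) x"
proof -
  have "3 dvd snd x \<longleftrightarrow> snd x = 0" using assms(3) by auto
  then have "twist (omega n ^ k) z x + twist (omega n ^ k) (z\<^sup>2) x =
      (if snd x = 0 then 2 else -1) * (omega n ^ k) ^ fst x"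
    by (simp add: twist_def cube_root_power_pair[OF assms(1)] flip: distrib_left)
  then show ?thesis using assms(2) by (simp add: psi_def power_mult)
qed

lemma psi_U_mult:
  fixes n k :: nat
  assumes n: "n \<ge> 1" and z: "z\<^sup>2 + z + 1 = 0" and parity: "odd (fst x) = odd (fst y)"
  defines "w \<equiv> omega n ^ k"
  shows "psi n k (x \<otimes>\<^bsub>U n\<^esub> y) =
    (if even (fst x) then twist w z x * twist w z y + twist w (z\<^sup>2) x * twist w (z\<^sup>2) y
     else twist w (z\<^sup>2) x * twist w z y + twist w z x * twist w (z\<^sup>2) y)"
proof -
  have w2n: "w ^ (2 * n) = 1"
    unfolding w_def by (simp add: omega_power_eq_1_iff[OF n] flip: power_mult)
  note z3 = power_3_eq_1_if_cube_root[OF z]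
  have z23: "(z\<^sup>2) ^ 3 = 1"
    using z3 by (metis power_mult mult.commute power_one)
  have z4: "z ^ 4 = z"
    using z3 by (simp add: power4_eq_xxxx power3_eq_cube mult.assoc)
  have "even (fst (U_mult n x y))" "snd (U_mult n x y) < 3"
    using parity by (simp_all add: U_mult_def even_mod_double_iff)
  then have "psi n k (x \<otimes>\<^bsub>U n\<^esub> y) = twist w z (U_mult n x y) + twist w (z\<^sup>2) (U_mult n x y)"
    unfolding mult_U w_def by (rule psi_eq_twist[OF z])
  then show ?thesis
    using parity by (simp add: twist_U_mult[OF w2n z3] twist_U_mult[OF w2n z23] z4)
qed

lemma char_sq_psi:
  fixes n k :: nat
  assumes n: "n \<ge> 1" and z: "z\<^sup>2 + z + 1 = 0"
  defines "w \<equiv> omega n ^ k"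
  shows "char_sq (U n) (psi n k) {s\<in>S. even (fst s)} =
      (sum (twist w z) {s\<in>S. even (fst s)})\<^sup>2 + (sum (twist w (z\<^sup>2)) {s\<in>S. even (fst s)})\<^sup>2"
    and "char_sq (U n) (psi n k) {s\<in>S. odd (fst s)} =
      2 * sum (twist w (z\<^sup>2)) {s\<in>S. odd (fst s)} * sum (twist w z) {s\<in>S. odd (fst s)}"
proof -
  let ?E = "{s\<in>S. even (fst s)}" and ?O = "{s\<in>S. odd (fst s)}"
  have "char_sq (U n) (psi n k) ?E =
      (\<Sum>x\<in>?E. \<Sum>y\<in>?E. twist w z x * twist w z y + twist w (z\<^sup>2) x * twist w (z\<^sup>2) y)"
    unfolding char_sq_def w_def by (intro sum.cong refl) (simp add: psi_U_mult[OF n z])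
  also have "\<dots> = sum (twist w z) ?E * sum (twist w z) ?E + sum (twist w (z\<^sup>2)) ?E * sum (twist w (z\<^sup>2)) ?E"
    by (simp add: sum.distrib sum_product)
  finally show "char_sq (U n) (psi n k) ?E = (sum (twist w z) ?E)\<^sup>2 + (sum (twist w (z\<^sup>2)) ?E)\<^sup>2"
    by (simp add: power2_eq_square)
  have "char_sq (U n) (psi n k) ?O =
      (\<Sum>x\<in>?O. \<Sum>y\<in>?O. twist w (z\<^sup>2) x * twist w z y + twist w z x * twist w (z\<^sup>2) y)"
    unfolding char_sq_def w_def by (intro sum.cong refl) (simp add: psi_U_mult[OF n z])
  also have "\<dots> = sum (twist w (z\<^sup>2)) ?O * sum (twist w z) ?O + sum (twist w z) ?O * sum (twist w (z\<^sup>2)) ?O"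
    by (simp add: sum.distrib sum_product)
  finally show "char_sq (U n) (psi n k) ?O = 2 * sum (twist w (z\<^sup>2)) ?O * sum (twist w z) ?O"
    by simp
qed

lemma U_block_Ints_iff_psi:
  fixes n k :: nat
  assumes n: "n \<ge> 1" and S: "S \<subseteq> carrier (U n)" and z: "z\<^sup>2 + z + 1 = 0"
  shows "(\<forall>x. U_block_eigenvalue (omega n ^ k) z S x \<longrightarrow> x \<in> \<int>) \<longleftrightarrow>
    char_set (psi n k) {s\<in>S. even (fst s)} \<in> \<int> \<and>
    char_sq (U n) (psi n k) {s\<in>S. even (fst s)} + char_sq (U n) (psi n k) {s\<in>S. odd (fst s)} \<in> \<int> \<and>
    (\<exists>m :: int. 2 * (char_sq (U n) (psi n k) {s\<in>S. even (fst s)} +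
        char_sq (U n) (psi n k) {s\<in>S. odd (fst s)}) -
      (char_set (psi n k) {s\<in>S. even (fst s)})\<^sup>2 = of_int (m\<^sup>2))"
proof -
  have "sum (twist (omega n ^ k) z) {s\<in>S. even (fst s)} + sum (twist (omega n ^ k) (z\<^sup>2)) {s\<in>S. even (fst s)} =
      char_set (psi n k) {s\<in>S. even (fst s)}"
    unfolding char_set_def sum.distrib[symmetric]
    by (intro sum.cong refl) (use S in \<open>auto simp: psi_eq_twist[OF z] carrier_U\<close>)
  then show ?thesis
    unfolding U_block_eigenvalue_def is_eigenvalue_2x2_Ints_iff char_sq_psi[OF n z] by simp
qed

theorem theorem3p1:
  fixes n :: nat and S :: "(nat \<times> nat) set"
  assumes "n \<ge> 1"
    and "S \<subseteq> carrier (U n)"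
    and "\<one>\<^bsub>U n\<^esub> \<notin> S"
    and "(\<lambda>s. inv\<^bsub>U n\<^esub> s) ` S = S"
  defines "S1 \<equiv> {x \<in> S. even (fst x)}"
    and "S2 \<equiv> {x \<in> S. odd (fst x)}"
  shows "integral_cayley (U n) S \<longleftrightarrow>
    (\<forall>j<2 * n. \<forall>k<n.
       char_set (chi n j) S \<in> \<int> \<and>
       char_set (psi n k) S1 \<in> \<int> \<and>
       char_sq (U n) (psi n k) S1 + char_sq (U n) (psi n k) S2 \<in> \<int> \<and>
       (\<exists>m :: int. 2 * (char_sq (U n) (psi n k) S1 + char_sq (U n) (psi n k) S2)
                     - (char_set (psi n k) S1)\<^sup>2 = of_int (m\<^sup>2)))"
proof -
  define psi_ok where "psi_ok k \<longleftrightarrow>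
    char_set (psi n k) S1 \<in> \<int> \<and>
    char_sq (U n) (psi n k) S1 + char_sq (U n) (psi n k) S2 \<in> \<int> \<and>
    (\<exists>m :: int. 2 * (char_sq (U n) (psi n k) S1 + char_sq (U n) (psi n k) S2)
                  - (char_set (psi n k) S1)\<^sup>2 = of_int (m\<^sup>2))" for k
  define block_ok where
    "block_ok k l \<longleftrightarrow> (\<forall>x. U_block_eigenvalue (omega n ^ k) (zeta ^ l) S x \<longrightarrow> x \<in> \<int>)" for k l
  have fin: "finite S" using assms(2) by (rule finite_subset) (simp add: carrier_U)
  have "integral_cayley (U n) S \<longleftrightarrow> (\<forall>k<n. \<forall>l<3. block_ok k l)"
    unfolding integral_cayley_def block_ok_def mat_eigenvalue_cay_U_iff[OF assms(1,2,4)] by blast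
  also have "\<dots> \<longleftrightarrow> (\<forall>k<n. block_ok k 0) \<and> (\<forall>k<n. psi_ok k)"
  proof -
    have "block_ok k l \<longleftrightarrow> psi_ok k" if "0 < l" "l < 3" for k l
      unfolding block_ok_def psi_ok_def S1_def S2_def
      by (rule U_block_Ints_iff_psi[OF assms(1,2) zeta_power_cube_root[OF that]])
    moreover have "(\<forall>l<3. P l) \<longleftrightarrow> P 0 \<and> P 1 \<and> P 2" for P :: "nat \<Rightarrow> bool"
      by (auto simp: numeral_3_eq_3 numeral_2_eq_2 less_Suc_eq)
    ultimately show ?thesis by auto
  qed
  also have "(\<forall>k<n. block_ok k 0) \<longleftrightarrow> (\<forall>j<2 * n. char_set (chi n j) S \<in> \<int>)"
    using U_block_1_Ints_iff_chi[OF assms(1) fin] by (simp add: block_ok_def)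
  also have "(\<forall>j<2 * n. char_set (chi n j) S \<in> \<int>) \<and> (\<forall>k<n. psi_ok k) \<longleftrightarrow>
      (\<forall>j<2 * n. \<forall>k<n. char_set (chi n j) S \<in> \<int> \<and> psi_ok k)"
    using assms(1) by force
  finally show ?thesis unfolding psi_ok_def .
qed

end
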